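(* Let $n\geq 2$, $1\leq k\leq n-1$, and $q=p^h$ with $p>5$ prime and $h\geq 1$. Let $B$ be a minimal $k$-blocking set in $\mathrm{PG}(n,q)$ such that every $(n-k)$-dimensional subspace of $\mathrm{PG}(n,q)$ meets $B$ in $1 \pmod p$ points. If $\theta_k<|B|<2q^k$, then \[ |B| < \frac{3(q^k-q^k/p)}{2}. \]
   Context: $\mathrm{PG}(n,q)$ is the $n$-dimensional projective space over $\mathbb{F}_q$, and $\theta_m=(q^{m+1}-1)/(q-1)$ is the number of points of $\mathrm{PG}(m,q)$. A $k$-blocking set of $\mathrm{PG}(n,q)$ is a set $K$ of points such that every $(n-k)$-dimensional subspace meets $K$. A point $P\in K$ is essential if some $(n-k)$-dimensional subspace meets $K$ exactly in $P$; $K$ is minimal if every point of $K$ is essential (equivalently, no proper subset of $K$ is a $k$-blocking set). *)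

theory Defs
  imports "HOL-Analysis.Analysis"
begin

text \<open>The projective space PG(n,q) is modelled as the lattice of linear subspaces
  of the vector space 'a^'n over a finite field 'a, where CARD('n) = n+1.
  A projective subspace of (projective) dimension d is a linear subspace of
  vector-space dimension d+1; points are the 1-dimensional linear subspaces.\<close>

definition proj_subspace :: "nat \<Rightarrow> ('a::field ^ 'n::finite) set \<Rightarrow> bool" where
  "proj_subspace d U \<longleftrightarrow> vec.subspace U \<and> vec.dim U = d + 1"

definition proj_points :: "('a::field ^ 'n::finite) set set" where
  "proj_points = {P. proj_subspace 0 P}"

definition meet :: "('a::field ^ 'n::finite) set set \<Rightarrow> ('a ^ 'n) set \<Rightarrow> ('a ^ 'n) set set" where
  "meet K U = {P \<in> K. P \<subseteq> U}"

definition blocking_set :: "nat \<Rightarrow> nat \<Rightarrow> ('a::field ^ 'n::finite) set set \<Rightarrow> bool" where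
  "blocking_set n k K \<longleftrightarrow> K \<subseteq> proj_points \<and>
     (\<forall>U. proj_subspace (n - k) U \<longrightarrow> meet K U \<noteq> {})"

definition essential_point :: "nat \<Rightarrow> nat \<Rightarrow> ('a::field ^ 'n::finite) set set \<Rightarrow> ('a ^ 'n) set \<Rightarrow> bool" where
  "essential_point n k K P \<longleftrightarrow> (\<exists>U. proj_subspace (n - k) U \<and> meet K U = {P})"

definition minimal_blocking_set :: "nat \<Rightarrow> nat \<Rightarrow> ('a::field ^ 'n::finite) set set \<Rightarrow> bool" where
  "minimal_blocking_set n k K \<longleftrightarrow> blocking_set n k K \<and> (\<forall>P\<in>K. essential_point n k K P)"

definition theta :: "nat \<Rightarrow> nat \<Rightarrow> nat" where
  "theta q m = (q ^ (m + 1) - 1) div (q - 1)"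

end

theory Submission
  imports Defs
begin

(* The proof is a variance (second moment) argument over the set S of all
   m-dimensional subspaces, m = n - k.  Write i_U = |B \<inter> U| for U in S,
   x = |B|, s = \<theta>_m (points of an m-space), T = \<theta>_n (points of PG(n,q)) and
   b = number of m-spaces through two fixed distinct points (a constant, since
   the collineation group is transitive on ordered pairs of distinct points).
   Counting flags gives |S| s(s-1) = T(T-1)b, \<Sigma> i_U (s-1) = x(T-1)b and
   \<Sigma> i_U(i_U - 1) = x(x-1)b.  Since every i_U \<ge> 1 and i_U \<equiv> 1 (mod p), each
   (i_U - 1)(i_U - 1 - p) is nonnegative; summing yields the quadratic inequality
   x(x-1)s(s-1) - (p+1)(T-1)(xs - T) \<ge> 0.  Finally an estimate of this quadratic
   in x (negative at 3(q^k - q^k/p)/2, nonpositive at 2q^k, convex in between)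
   rules out the range 3(q^k - q^k/p)/2 \<le> x < 2q^k. *)

lemma card_field_gt_1: "CARD('a::{field,finite}) > 1"
proof -
  have "card {0 :: 'a, 1} \<le> CARD('a)" by (rule card_mono) auto
  then show ?thesis by simp
qed

lemma card_span_independent:
  fixes S :: "('a::{field,finite} ^ 'n::finite) set"
  assumes "finite S" "vec.independent S"
  shows "card (vec.span S) = CARD('a) ^ card S"
  using assms
proof (induction S rule: finite_induct)
  case empty
  then show ?case by simp
next
  case (insert v F)
  have vF: "v \<notin> vec.span F" and iF: "vec.independent F"
    using insert.prems insert.hyps by (auto simp: vec.independent_insert)
  let ?f = "\<lambda>(c, w). c *s v + w"
  have bij: "bij_betw ?f ((UNIV::'a set) \<times> vec.span F) (vec.span (insert v F))"
  proof (rule bij_betwI')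
    fix x y assume x: "x \<in> (UNIV::'a set) \<times> vec.span F" and y: "y \<in> (UNIV::'a set) \<times> vec.span F"
    obtain c w where [simp]: "x = (c, w)" by (cases x)
    obtain d u where [simp]: "y = (d, u)" by (cases y)
    show "(?f x = ?f y) = (x = y)"
    proof
      assume "?f x = ?f y"
      hence e: "(c - d) *s v = u - w"
        by (simp add: algebra_simps vector_sadd_rdistrib vector_ssub_ldistrib)
      have "c = d"
      proof (rule ccontr)
        assume "c \<noteq> d"
        hence "v = inverse (c - d) *s (u - w)"
          using e by (metis vec.scale_scale left_inverse right_minus_eq vec.scale_one)
        moreover have "u - w \<in> vec.span F" using x y by (simp add: vec.span_diff)
        ultimately show False using vF vec.span_scale by metis
      qed
      thus "x = y" using e by simp
    qed simp
  next
    fix x assume "x \<in> (UNIV::'a set) \<times> vec.span F"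
    then obtain c w where "x = (c, w)" "w \<in> vec.span F" by blast
    moreover have "vec.span F \<subseteq> vec.span (insert v F)" by (rule vec.span_mono) blast
    moreover have "c *s v \<in> vec.span (insert v F)" by (simp add: vec.span_base vec.span_scale)
    ultimately show "?f x \<in> vec.span (insert v F)" by (auto intro: vec.span_add)
  next
    fix y assume "y \<in> vec.span (insert v F)"
    then obtain c where "y - c *s v \<in> vec.span F" using vec.span_breakdown_eq by blast
    then show "\<exists>x\<in>(UNIV::'a set) \<times> vec.span F. y = ?f x"
      by (intro bexI[of _ "(c, y - c *s v)"]) auto
  qed
  have "card (vec.span (insert v F)) = CARD('a) * CARD('a) ^ card F"
    using bij_betw_same_card[OF bij] insert.IH[OF iF] by (simp add: card_cartesian_product)
  then show ?case using insert.hyps by simp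
qed

lemma card_subspace:
  fixes U :: "('a::{field,finite} ^ 'n::finite) set"
  assumes "vec.subspace U"
  shows "card U = CARD('a) ^ vec.dim U"
proof -
  obtain C where C: "C \<subseteq> U" "vec.independent C" "U \<subseteq> vec.span C" "card C = vec.dim U"
    using vec.basis_exists by blast
  have "vec.span C = U" using vec.span_subspace[OF C(1) C(3) assms] .
  thus ?thesis using card_span_independent[of C] C vec.finiteI_independent by metis
qed

lemma proj_point_iff:
  fixes P :: "('a::field ^ 'n::finite) set"
  shows "proj_subspace 0 P \<longleftrightarrow> (\<exists>v. v \<noteq> 0 \<and> P = vec.span {v})"
proof
  assume "proj_subspace 0 P"
  hence s: "vec.subspace P" and d: "vec.dim P = 1" unfolding proj_subspace_def by auto
  obtain C where C: "C \<subseteq> P" "vec.independent C" "P \<subseteq> vec.span C" "card C = vec.dim P"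
    using vec.basis_exists by blast
  then obtain v where "C = {v}" using d card_1_singletonE by metis
  moreover have "v \<noteq> 0" using C(2) \<open>C = {v}\<close> vec.dependent_zero by blast
  moreover have "vec.span C = P" using vec.span_subspace[OF C(1) C(3) s] .
  ultimately show "\<exists>v. v \<noteq> 0 \<and> P = vec.span {v}" by blast
next
  assume "\<exists>v. v \<noteq> 0 \<and> P = vec.span {v}"
  then show "proj_subspace 0 P" unfolding proj_subspace_def by (auto simp: vec.subspace_span)
qed

lemma proj_point_eq_span:
  fixes P :: "('a::field ^ 'n::finite) set"
  assumes "proj_subspace 0 P" "v \<in> P" "v \<noteq> 0"
  shows "P = vec.span {v}"
proof -
  have s: "vec.subspace P" and d: "vec.dim P = 1" using assms(1) unfolding proj_subspace_def by auto
  have "vec.span {v} \<subseteq> P" using assms(2) s by (simp add: vec.span_minimal)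
  moreover have "vec.dim (vec.span {v}) = vec.dim P" using d assms(3) by simp
  ultimately show ?thesis using vec.subspace_dim_equal[OF vec.subspace_span s, of "{v}"] by simp
qed

lemma proj_points_independent:
  fixes P Q :: "('a::field ^ 'n::finite) set"
  assumes "proj_subspace 0 P" "proj_subspace 0 Q" "P \<noteq> Q"
  obtains u v where "P = vec.span {u}" "Q = vec.span {v}" "vec.independent {u, v}" "u \<noteq> v"
proof -
  obtain u where u: "u \<noteq> 0" "P = vec.span {u}" using assms(1) proj_point_iff by metis
  obtain v where v: "v \<noteq> 0" "Q = vec.span {v}" using assms(2) proj_point_iff by metis
  have "u \<notin> vec.span {v}"
  proof
    assume "u \<in> vec.span {v}"
    hence "Q = vec.span {u}" using proj_point_eq_span[OF assms(2)] u(1) v(2) by blast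
    thus False using assms(3) u(2) by simp
  qed
  moreover have "vec.independent {v}" using v(1) by (simp add: vec.independent_insert)
  ultimately have "vec.independent {u, v}" by (simp add: vec.independent_insertI)
  moreover have "u \<noteq> v" using u v assms(3) by auto
  ultimately show ?thesis using that u v by blast
qed

text \<open>A projective d-space contains (q^(d+1) - 1)/(q - 1) points: its nonzero vectors
  are partitioned by the points it contains, each point carrying q - 1 of them.\<close>
lemma card_points_in_subspace:
  fixes U :: "('a::{field,finite} ^ 'n::finite) set"
  assumes "vec.subspace U"
  shows "card (meet proj_points U) * (CARD('a) - 1) = CARD('a) ^ vec.dim U - 1"
proof -
  let ?X = "meet proj_points U"
  have "U - {0} = (\<Union>P\<in>?X. P - {0})"
  proof
    show "U - {0} \<subseteq> (\<Union>P\<in>?X. P - {0})"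
    proof
      fix v assume v: "v \<in> U - {0}"
      have "vec.span {v} \<in> ?X" using v assms proj_point_iff[of "vec.span {v}"]
        by (auto simp: meet_def proj_points_def vec.span_minimal)
      moreover have "v \<in> vec.span {v} - {0}" using v by (simp add: vec.span_base)
      ultimately show "v \<in> (\<Union>P\<in>?X. P - {0})" by blast
    qed
  qed (auto simp: meet_def)
  hence "card (U - {0}) = (\<Sum>P\<in>?X. card (P - {0}))"
  proof (simp only:, intro card_UN_disjoint ballI impI)
    fix P Q assume P: "P \<in> ?X" and Q: "Q \<in> ?X" and "P \<noteq> Q"
    have "P = vec.span {v}" "Q = vec.span {v}" if "v \<in> P" "v \<in> Q" "v \<noteq> 0" for v
      using that P Q proj_point_eq_span by (auto simp: meet_def proj_points_def)
    then show "(P - {0}) \<inter> (Q - {0}) = {}" using \<open>P \<noteq> Q\<close> by blast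
  qed auto
  also have "\<dots> = (\<Sum>P\<in>?X. CARD('a) - 1)"
  proof (rule sum.cong)
    fix P assume "P \<in> ?X"
    hence P: "proj_subspace 0 P" by (simp add: meet_def proj_points_def)
    hence "card P = CARD('a)" using card_subspace unfolding proj_subspace_def by fastforce
    moreover have "0 \<in> P" using P vec.subspace_0 unfolding proj_subspace_def by blast
    ultimately show "card (P - {0}) = CARD('a) - 1" by simp
  qed simp
  finally have "card (U - {0}) = card ?X * (CARD('a) - 1)" by simp
  moreover have "card (U - {0}) = CARD('a) ^ vec.dim U - 1"
    using vec.subspace_0[OF assms] card_subspace[OF assms] by simp
  ultimately show ?thesis by simp
qed

corollary card_points_of_proj_subspace:
  fixes U :: "('a::{field,finite} ^ 'n::finite) set"
  assumes "proj_subspace d U"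
  shows "real (card (meet proj_points U)) = (real CARD('a) ^ (d + 1) - 1) / (real CARD('a) - 1)"
proof -
  have "card (meet proj_points U) * (CARD('a) - 1) = CARD('a) ^ (d + 1) - 1"
    using card_points_in_subspace[of U] assms unfolding proj_subspace_def by auto
  moreover have q: "CARD('a) > 1" by (rule card_field_gt_1)
  ultimately have "real (card (meet proj_points U)) * (real CARD('a) - 1) = real CARD('a) ^ (d + 1) - 1"
    by (metis of_nat_1 of_nat_diff of_nat_mult of_nat_power less_imp_le one_le_power)
  then show ?thesis using q by (simp add: field_simps)
qed

lemma exists_subspace_containing:
  fixes S :: "('a::field ^ 'n::finite) set"
  assumes "vec.independent S" "card S \<le> d + 1" "d + 1 \<le> CARD('n)"
  shows "\<exists>U. proj_subspace d U \<and> S \<subseteq> U"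
proof -
  let ?B = "vec.extend_basis S"
  have iB: "vec.independent ?B" using vec.independent_extend_basis[OF assms(1)] .
  have fB: "finite ?B" using iB vec.finiteI_independent by blast
  have "card ?B = vec.dim (UNIV :: ('a^'n) set)"
    using vec.dim_span_eq_card_independent[OF iB] assms(1) by simp
  hence cB: "card ?B = CARD('n)" by (simp add: card_cart_basis)
  have SB: "S \<subseteq> ?B" using vec.extend_basis_superset[OF assms(1)] .
  have fS: "finite S" using assms(1) vec.finiteI_independent by blast
  have "d + 1 - card S \<le> card (?B - S)" using cB SB fB assms by (simp add: card_Diff_subset finite_subset)
  then obtain D where D: "D \<subseteq> ?B - S" "card D = d + 1 - card S"
    using obtain_subset_with_card_n by metis
  have iC: "vec.independent (S \<union> D)" using vec.independent_mono[OF iB] D SB by blast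
  have "card (S \<union> D) = d + 1" using D fS assms(2) fB
    by (subst card_Un_disjoint) (auto intro: finite_subset)
  hence "proj_subspace d (vec.span (S \<union> D))" unfolding proj_subspace_def
    using vec.dim_span_eq_card_independent[OF iC] by (simp add: vec.subspace_span)
  moreover have "S \<subseteq> vec.span (S \<union> D)" using vec.span_superset by blast
  ultimately show ?thesis by blast
qed

lemma linear_image_proj_subspace:
  fixes f :: "'a::field ^ 'n::finite \<Rightarrow> 'a ^ 'n"
  assumes lf: "Vector_Spaces.linear (*s) (*s) f" and inj: "inj f"
    and U: "proj_subspace d U"
  shows "proj_subspace d (f ` U)"
proof -
  interpret f: Vector_Spaces.linear "(*s)" "(*s)" f by (rule lf)
  have "vec.subspace (f ` U)" using U f.subspace_image unfolding proj_subspace_def by blast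
  moreover have "vec.dim (f ` U) = vec.dim U"
    using vec.dim_image_eq[OF lf] inj by (simp add: inj_on_subset)
  ultimately show ?thesis using U unfolding proj_subspace_def by simp
qed

lemma collineations_transitive_on_pairs:
  fixes P1 P2 P1' P2' :: "('a::field ^ 'n::finite) set"
  assumes "proj_subspace 0 P1" "proj_subspace 0 P2" "P1 \<noteq> P2"
    "proj_subspace 0 P1'" "proj_subspace 0 P2'" "P1' \<noteq> P2'"
  shows "\<exists>f. Vector_Spaces.linear (*s) (*s) f \<and> inj f \<and> f ` P1 = P1' \<and> f ` P2 = P2'"
proof -
  obtain u1 u2 where u: "P1 = vec.span {u1}" "P2 = vec.span {u2}" "vec.independent {u1, u2}" "u1 \<noteq> u2"
    using proj_points_independent[OF assms(1-3)] .
  obtain v1 v2 where v: "P1' = vec.span {v1}" "P2' = vec.span {v2}" "vec.independent {v1, v2}" "v1 \<noteq> v2"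
    using proj_points_independent[OF assms(4-6)] .
  define g where "g = (\<lambda>x. if x = u1 then v1 else v2)"
  have "g ` {u1, u2} = {v1, v2}" "inj_on g {u1, u2}" using u(4) v(4) by (auto simp: g_def inj_on_def)
  then obtain f where f: "Vector_Spaces.linear (*s) (*s) f" "inj f" "\<forall>x\<in>{u1, u2}. f x = g x"
    using vec.linear_independent_extend_inj[OF u(3) _ ] v(3) by metis
  interpret f: Vector_Spaces.linear "(*s)" "(*s)" f by (rule f(1))
  have "f ` P1 = P1'" "f ` P2 = P2'"
    using u v f(3) f.span_image[of "{u1}"] f.span_image[of "{u2}"] by (auto simp: g_def)
  then show ?thesis using f by blast
qed

lemma card_subspaces_through_pair_invariant:
  fixes P1 P2 P1' P2' :: "('a::{field,finite} ^ 'n::finite) set"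
  assumes "proj_subspace 0 P1" "proj_subspace 0 P2" "P1 \<noteq> P2"
    "proj_subspace 0 P1'" "proj_subspace 0 P2'" "P1' \<noteq> P2'"
  shows "card {U. proj_subspace d U \<and> P1 \<subseteq> U \<and> P2 \<subseteq> U}
       = card {U. proj_subspace d U \<and> P1' \<subseteq> U \<and> P2' \<subseteq> U}"
proof -
  have le: "card {U. proj_subspace d U \<and> A1 \<subseteq> U \<and> A2 \<subseteq> U}
       \<le> card {U. proj_subspace d U \<and> A1' \<subseteq> U \<and> A2' \<subseteq> U}"
    if a: "proj_subspace 0 A1" "proj_subspace 0 A2" "A1 \<noteq> A2"
    "proj_subspace 0 A1'" "proj_subspace 0 A2'" "A1' \<noteq> A2'" for A1 A2 A1' A2' :: "('a ^ 'n) set"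
  proof -
    obtain f where f: "Vector_Spaces.linear (*s) (*s) f" "inj f" "f ` A1 = A1'" "f ` A2 = A2'"
      using collineations_transitive_on_pairs[OF a] by blast
    show ?thesis
    proof (rule card_inj_on_le[where f="\<lambda>U. f ` U"])
      show "inj_on ((`) f) {U. proj_subspace d U \<and> A1 \<subseteq> U \<and> A2 \<subseteq> U}"
        using f(2) by (simp add: inj_on_def inj_image_eq_iff)
      show "(`) f ` {U. proj_subspace d U \<and> A1 \<subseteq> U \<and> A2 \<subseteq> U}
            \<subseteq> {U. proj_subspace d U \<and> A1' \<subseteq> U \<and> A2' \<subseteq> U}"
        using f linear_image_proj_subspace[OF f(1) f(2)] by blast
    qed simp
  qed
  show ?thesis using le[OF assms] le[OF assms(4-6) assms(1-3)] by simp
qed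

lemma subspaces_through_pair_constant:
  fixes d :: nat
  assumes "1 \<le> d" "d + 1 \<le> CARD('n::finite)"
  obtains b where "b > 0"
    and "\<And>P Q :: ('a::{field,finite} ^ 'n) set. P \<in> proj_points \<Longrightarrow> Q \<in> proj_points \<Longrightarrow> P \<noteq> Q \<Longrightarrow>
           card {U. proj_subspace d U \<and> P \<subseteq> U \<and> Q \<subseteq> U} = b"
proof (cases "\<exists>P0 Q0 :: ('a ^ 'n) set. P0 \<in> proj_points \<and> Q0 \<in> proj_points \<and> P0 \<noteq> Q0")
  case True
  then obtain P0 Q0 :: "('a ^ 'n) set" where P0: "proj_subspace 0 P0" and Q0: "proj_subspace 0 Q0"
    and "P0 \<noteq> Q0" by (auto simp: proj_points_def)
  then obtain u v where uv: "P0 = vec.span {u}" "Q0 = vec.span {v}" "vec.independent {u, v}" "u \<noteq> v"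
    using proj_points_independent by metis
  obtain U where U: "proj_subspace d U" "{u, v} \<subseteq> U"
    using exists_subspace_containing[OF uv(3)] uv(4) assms by fastforce
  hence "P0 \<subseteq> U" "Q0 \<subseteq> U"
    using uv(1,2) vec.span_minimal[of "{u}" U] vec.span_minimal[of "{v}" U]
    unfolding proj_subspace_def by auto
  hence "card {U. proj_subspace d U \<and> P0 \<subseteq> U \<and> Q0 \<subseteq> U} > 0" using U(1) card_gt_0_iff by fastforce
  then show ?thesis
    using that card_subspaces_through_pair_invariant[OF _ _ _ P0 Q0 \<open>P0 \<noteq> Q0\<close>]
    by (auto simp: proj_points_def)
qed (use that[of 1] in blast)

lemma double_count:
  fixes X Y :: "('a::{field,finite} ^ 'n::finite) set set"
  shows "(\<Sum>U | proj_subspace d U. \<Sum>P\<in>meet X U. card (meet Y U - {P}))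
       = (\<Sum>P\<in>X. \<Sum>Q\<in>Y - {P}. card {U. proj_subspace d U \<and> P \<subseteq> U \<and> Q \<subseteq> U})"
proof -
  let ?S = "{U. proj_subspace d U}"
  let ?ind = "\<lambda>U P Q. if P \<subseteq> U \<and> Q \<subseteq> U then 1 else (0::nat)"
  have inner: "(\<Sum>P\<in>meet X U. card (meet Y U - {P})) = (\<Sum>P\<in>X. \<Sum>Q\<in>Y - {P}. ?ind U P Q)" for U
  proof -
    have "(\<Sum>P\<in>meet X U. card (meet Y U - {P})) = (\<Sum>P\<in>X. if P \<subseteq> U then card (meet Y U - {P}) else 0)"
      unfolding meet_def by (simp add: sum.If_cases Int_def)
    also have "\<dots> = (\<Sum>P\<in>X. \<Sum>Q\<in>Y - {P}. ?ind U P Q)"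
    proof (rule sum.cong[OF refl])
      fix P
      have "card (meet Y U - {P}) = (\<Sum>Q\<in>Y - {P}. if Q \<subseteq> U then 1 else 0)"
        unfolding meet_def by (simp add: sum.If_cases Int_def set_diff_eq, rule arg_cong[where f=card], blast)
      then show "(if P \<subseteq> U then card (meet Y U - {P}) else 0) = (\<Sum>Q\<in>Y - {P}. ?ind U P Q)"
        by simp
    qed
    finally show ?thesis .
  qed
  have "(\<Sum>U\<in>?S. \<Sum>P\<in>meet X U. card (meet Y U - {P})) = (\<Sum>U\<in>?S. \<Sum>P\<in>X. \<Sum>Q\<in>Y - {P}. ?ind U P Q)"
    by (simp only: inner)
  also have "\<dots> = (\<Sum>P\<in>X. \<Sum>Q\<in>Y - {P}. \<Sum>U\<in>?S. ?ind U P Q)"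
    by (subst sum.swap) (simp only: sum.swap[of _ ?S])
  also have "\<dots> = (\<Sum>P\<in>X. \<Sum>Q\<in>Y - {P}. card {U. proj_subspace d U \<and> P \<subseteq> U \<and> Q \<subseteq> U})"
    by (simp add: sum.If_cases Int_def)
  finally show ?thesis .
qed

lemma flag_count:
  fixes X Y :: "('a::{field,finite} ^ 'n::finite) set set"
  assumes XY: "X \<subseteq> Y"
    and b: "\<And>P Q. P \<in> Y \<Longrightarrow> Q \<in> Y \<Longrightarrow> P \<noteq> Q \<Longrightarrow> card {U. proj_subspace d U \<and> P \<subseteq> U \<and> Q \<subseteq> U} = b"
  shows "(\<Sum>U | proj_subspace d U. real (card (meet X U)) * (real (card (meet Y U)) - 1))
       = real (card X) * (real (card Y) - 1) * real b"
proof -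
  have remove_one: "real (card (A - {P})) = real (card A) - 1" if "P \<in> A" "finite A" for P :: "('a ^ 'n) set" and A
  proof -
    have "card A \<ge> 1" using that by (metis One_nat_def Suc_leI card_gt_0_iff empty_iff)
    then show ?thesis using that by (simp add: card_Diff_singleton of_nat_diff)
  qed
  have per_subspace: "real (card (meet X U)) * (real (card (meet Y U)) - 1)
      = (\<Sum>P\<in>meet X U. real (card (meet Y U - {P})))" for U
  proof -
    have "real (card (meet Y U - {P})) = real (card (meet Y U)) - 1" if "P \<in> meet X U" for P
      using that XY by (intro remove_one) (auto simp: meet_def)
    then show ?thesis by simp
  qed
  have "(\<Sum>U | proj_subspace d U. real (card (meet X U)) * (real (card (meet Y U)) - 1))
      = (\<Sum>U | proj_subspace d U. \<Sum>P\<in>meet X U. real (card (meet Y U - {P})))"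
    by (simp only: per_subspace)
  also have "\<dots> = real (\<Sum>P\<in>X. \<Sum>Q\<in>Y - {P}. card {U. proj_subspace d U \<and> P \<subseteq> U \<and> Q \<subseteq> U})"
    by (simp flip: double_count)
  also have "\<dots> = (\<Sum>P\<in>X. \<Sum>Q\<in>Y - {P}. real b)"
    unfolding of_nat_sum using XY b by (intro sum.cong refl) auto
  also have "\<dots> = (\<Sum>P\<in>X. (real (card Y) - 1) * real b)"
  proof (rule sum.cong[OF refl])
    fix P assume "P \<in> X"
    then show "(\<Sum>Q\<in>Y - {P}. real b) = (real (card Y) - 1) * real b"
      using XY remove_one[of P Y] by auto
  qed
  also have "\<dots> = real (card X) * (real (card Y) - 1) * real b" by simp
  finally show ?thesis .
qed

text \<open>An integer i \<ge> 1 with i \<equiv> 1 (mod p) is either 1 or at least p + 1,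
  so (i - 1)(i - 1 - p) \<ge> 0.\<close>
lemma congruent_one_quadratic_nonneg:
  fixes i p :: nat
  assumes "i \<ge> 1" "i mod p = 1 mod p" "p > 1"
  shows "(real i - 1) * (real i - 1 - real p) \<ge> 0"
proof -
  have "i mod p = 1" using assms by simp
  then obtain j where j: "i = p * j + 1" by (metis div_mult_mod_eq mult.commute)
  have "(real i - 1) * (real i - 1 - real p) = real p ^ 2 * (real j * (real j - 1))"
    using j by (simp add: algebra_simps power2_eq_square)
  moreover have "real j * (real j - 1) \<ge> 0" by (cases "j = 0") auto
  ultimately show ?thesis by simp
qed

text \<open>The variance argument in abstract form: if the intersection numbers i_U satisfy the three
  standard equations and all are \<equiv> 1 (mod p), then
  x(x-1)s(s-1) - (p+1)(T-1)(xs - T) \<ge> 0.  This is s(s-1)/b times \<Sum>_U (i_U - 1)(i_U - 1 - p).\<close>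
lemma variance_inequality:
  fixes S :: "'b set" and i :: "'b \<Rightarrow> nat" and p :: nat and x s T b :: real
  assumes "finite S" "p > 1"
    and i: "\<And>U. U \<in> S \<Longrightarrow> i U \<ge> 1 \<and> i U mod p = 1 mod p"
    and E1: "real (card S) * (s * (s - 1)) = T * (T - 1) * b"
    and E2: "(\<Sum>U\<in>S. real (i U)) * (s - 1) = x * (T - 1) * b"
    and E3: "(\<Sum>U\<in>S. real (i U) * (real (i U) - 1)) = x * (x - 1) * b"
    and "b > 0" "s > 1"
  shows "x * (x - 1) * s * (s - 1) - (real p + 1) * (T - 1) * (x * s - T) \<ge> 0"
proof -
  define V where "V = (\<Sum>U\<in>S. (real (i U) - 1) * (real (i U) - 1 - real p))"
  have "V \<ge> 0" unfolding V_def using i \<open>p > 1\<close> congruent_one_quadratic_nonneg by (intro sum_nonneg) blast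
  have "V = (\<Sum>U\<in>S. real (i U) * (real (i U) - 1)) - (real p + 1) * (\<Sum>U\<in>S. real (i U))
           + (real p + 1) * real (card S)"
    unfolding V_def by (simp add: algebra_simps sum.distrib sum_subtractf sum_distrib_left)
  hence "s * (s - 1) * V = b * (x * (x - 1) * s * (s - 1) - (real p + 1) * (T - 1) * (x * s - T))"
    using E1 E2 E3 by algebra
  moreover have "s * (s - 1) * V \<ge> 0" using \<open>V \<ge> 0\<close> \<open>s > 1\<close> by simp
  ultimately show ?thesis using \<open>b > 0\<close> by (simp add: zero_le_mult_iff)
qed

lemma intersection_variance_inequality:
  fixes K :: "('a::{field,finite} ^ 'n::finite) set set" and p m n :: nat
  assumes "CARD('n) = n + 1" "1 \<le> m" "m < n" "K \<subseteq> proj_points" "p > 1"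
    and K: "\<And>U. proj_subspace m U \<Longrightarrow> meet K U \<noteq> {} \<and> card (meet K U) mod p = 1 mod p"
  defines "q \<equiv> real CARD('a)"
  defines "s \<equiv> (q ^ (m + 1) - 1) / (q - 1)" and "T \<equiv> (q ^ (n + 1) - 1) / (q - 1)"
    and "x \<equiv> real (card K)"
  shows "x * (x - 1) * s * (s - 1) - (real p + 1) * (T - 1) * (x * s - T) \<ge> 0"
proof -
  let ?S = "{U :: ('a ^ 'n) set. proj_subspace m U}"
  obtain b where "b > 0" and b: "\<And>P Q :: ('a ^ 'n) set. P \<in> proj_points \<Longrightarrow> Q \<in> proj_points \<Longrightarrow>
      P \<noteq> Q \<Longrightarrow> card {U. proj_subspace m U \<and> P \<subseteq> U \<and> Q \<subseteq> U} = b"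
    using subspaces_through_pair_constant[where 'a='a and 'n='n and d=m] assms(1-3) by auto
  have sU: "real (card (meet proj_points U)) = s" if "U \<in> ?S" for U
    using that card_points_of_proj_subspace unfolding s_def q_def by auto
  have "proj_subspace n (UNIV :: ('a ^ 'n) set)"
    using assms(1) by (simp add: proj_subspace_def vec.subspace_UNIV card_cart_basis)
  moreover have "meet proj_points (UNIV :: ('a ^ 'n) set) = proj_points" by (simp add: meet_def)
  ultimately have T: "real (card (proj_points :: ('a ^ 'n) set set)) = T"
    using card_points_of_proj_subspace unfolding T_def q_def by metis
  have "q > 1" using card_field_gt_1[where 'a='a] unfolding q_def by simp
  moreover have "q ^ 1 < q ^ (m + 1)" using \<open>q > 1\<close> assms(2) by (intro power_strict_increasing) auto
  ultimately have "s > 1" unfolding s_def by (simp add: field_simps)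
  have "real (card ?S) * (s * (s - 1))
        = (\<Sum>U\<in>?S. real (card (meet proj_points U)) * (real (card (meet proj_points U)) - 1))"
    using sU by simp
  also have "\<dots> = T * (T - 1) * real b"
    using flag_count[OF subset_refl b] T by simp
  finally have E1: "real (card ?S) * (s * (s - 1)) = T * (T - 1) * real b" .
  have "(\<Sum>U\<in>?S. real (card (meet K U)) * (real (card (meet proj_points U)) - 1))
        = (\<Sum>U\<in>?S. real (card (meet K U))) * (s - 1)"
    using sU by (simp add: sum_distrib_right)
  hence E2: "(\<Sum>U\<in>?S. real (card (meet K U))) * (s - 1) = x * (T - 1) * real b"
    using flag_count[OF assms(4) b] T unfolding x_def by simp
  have E3: "(\<Sum>U\<in>?S. real (card (meet K U)) * (real (card (meet K U)) - 1)) = x * (x - 1) * real b"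
    using flag_count[OF subset_refl, of K m b] b assms(4) unfolding x_def by (simp add: subset_iff)
  have "\<And>U. U \<in> ?S \<Longrightarrow> card (meet K U) \<ge> 1 \<and> card (meet K U) mod p = 1 mod p"
    using K by (simp add: Suc_le_eq card_gt_0_iff)
  then show ?thesis
    using variance_inequality[OF _ \<open>p > 1\<close> _ E1 E2 E3] \<open>b > 0\<close> \<open>s > 1\<close> by simp
qed

lemma quadratic_below_chord:
  fixes a b x al be ga :: real
  assumes "al \<ge> 0" "a \<le> x" "x < b"
    "al * a^2 + be * a + ga < 0" "al * b^2 + be * b + ga \<le> 0"
  shows "al * x^2 + be * x + ga < 0"
proof -
  have id: "(b - a) * (al * x^2 + be * x + ga)
      = (b - x) * (al * a^2 + be * a + ga) + (x - a) * (al * b^2 + be * b + ga)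
        - al * ((b - a) * ((x - a) * (b - x)))" by algebra
  have "(b - x) * (al * a^2 + be * a + ga) < 0" using assms by (simp add: mult_pos_neg)
  moreover have "(x - a) * (al * b^2 + be * b + ga) \<le> 0" using assms by (simp add: mult_nonneg_nonpos)
  moreover have "al * ((b - a) * ((x - a) * (b - x))) \<ge> 0" using assms by simp
  ultimately have "(b - a) * (al * x^2 + be * x + ga) < 0" using id by linarith
  then show ?thesis using assms by (simp add: mult_less_0_iff)
qed

lemma large_square_bounds:
  fixes q w :: real
  assumes "q \<ge> 7" "w \<ge> q^2"
  shows "w \<ge> 49" "w > q"
proof -
  have "7 * 7 \<le> q * q" "7 * q \<le> q * q" using assms(1) by (intro mult_mono; simp)+
  then show "w \<ge> 49" "w > q" using assms unfolding power2_eq_square by linarith+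
qed

text \<open>After clearing the denominators (q - 1)^2 and writing w = q^(m+1), Q = q^k, the variance
  inequality says h(x) \<ge> 0 for the following quadratic h in x = |B|.\<close>
definition size_quadratic :: "real \<Rightarrow> real \<Rightarrow> real \<Rightarrow> real \<Rightarrow> real \<Rightarrow> real" where
  "size_quadratic p q Q w z = z * (z - 1) * (w - 1) * (w - q) - (p + 1) * (Q * w - q) * (z * (w - 1) - (Q * w - 1))"

text \<open>h has leading coefficient (w - 1)(w - q) \<ge> 0, so it is negative between a point where
  it is negative and a larger point where it is nonpositive.\<close>
lemma size_quadratic_neg_between:
  fixes p q Q w a z c :: real
  assumes "1 \<le> w" "q \<le> w" "a \<le> z" "z < c"
    and "size_quadratic p q Q w a < 0" "size_quadratic p q Q w c \<le> 0"
  shows "size_quadratic p q Q w z < 0"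
proof -
  define al where "al = (w - 1) * (w - q)"
  define be where "be = - (w - 1) * (w - q) - (p + 1) * (Q * w - q) * (w - 1)"
  define ga where "ga = (p + 1) * (Q * w - q) * (Q * w - 1)"
  have h: "size_quadratic p q Q w y = al * y^2 + be * y + ga" for y
    unfolding size_quadratic_def al_def be_def ga_def by (simp add: algebra_simps power2_eq_square)
  have "al \<ge> 0" unfolding al_def using assms(1,2) by simp
  then show ?thesis using quadratic_below_chord[of al a z c be ga] assms(3-6) unfolding h by blast
qed

lemma size_quadratic_at_double:
  fixes p q Q w :: real
  assumes "p \<ge> 7" "q \<ge> 7" "Q \<ge> 1" "w \<ge> 49" "w > q"
  shows "size_quadratic p q Q w (2 * Q) \<le> 0"
proof -
  have A: "Q * (w - q) \<le> Q * w - q" and A0: "0 \<le> Q * (w - q)"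
    using assms by (simp_all add: algebra_simps)
  have B: "Q * (w - 2) \<le> Q * w - 2 * Q + 1" and B0: "0 \<le> Q * (w - 2)"
    using assms by (simp_all add: algebra_simps)
  have "(Q * (w - q)) * (Q * (w - 2)) \<le> (Q * w - q) * (Q * w - 2 * Q + 1)"
    using A B A0 B0 by (intro mult_mono) auto
  hence AB8: "8 * ((Q * (w - q)) * (Q * (w - 2))) \<le> (p + 1) * ((Q * w - q) * (Q * w - 2 * Q + 1))"
    using assms(1) A0 B0 by (rule_tac mult_mono) auto
  have "8 * ((Q * (w - q)) * (Q * (w - 2))) - 2 * Q * (2 * Q - 1) * (w - 1) * (w - q)
      = (Q * (w - q)) * (4 * Q * (w - 3) + 2 * (w - 1))"
    by (simp add: algebra_simps)
  moreover have "(Q * (w - q)) * (4 * Q * (w - 3) + 2 * (w - 1)) \<ge> 0" using A0 assms by simp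
  ultimately have "2 * Q * (2 * Q - 1) * (w - 1) * (w - q) \<le> (p + 1) * ((Q * w - q) * (Q * w - 2 * Q + 1))"
    using AB8 by linarith
  then show ?thesis unfolding size_quadratic_def by (simp add: algebra_simps)
qed

lemma bound_polynomial_estimate:
  fixes p w :: real
  assumes "p \<ge> 7" "w \<ge> p^2"
  shows "9 * (p - 1)^2 * (w - 1) \<le> 2 * p * (p + 1) * ((p - 3) * w - 3 * (p - 1))"
proof -
  define D where "D = 2 * p * (p + 1) * (p - 3) - 9 * (p - 1)^2"
  have "D - p^2 = 2 * p^2 * (p - 7) + (12 * p - 9)" unfolding D_def by (simp add: algebra_simps power2_eq_square)
  moreover have "2 * p^2 * (p - 7) \<ge> 0" using assms by simp
  ultimately have D: "D \<ge> p^2" using assms by linarith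
  have "w \<ge> 0" using assms(2) by (smt (verit) zero_le_power2)
  hence "w * D \<ge> p^2 * p^2" using D assms by (intro mult_mono) auto
  moreover have "p^2 * p^2 - (6 * p * (p^2 - 1) - 9 * (p - 1)^2) = p^3 * (p - 6) + 6 * p + 9 * (p - 1)^2"
    by (simp add: algebra_simps power2_eq_square power3_eq_cube)
  moreover have "p^3 * (p - 6) \<ge> 0" using assms by simp
  moreover have "2 * p * (p + 1) * ((p - 3) * w - 3 * (p - 1)) - 9 * (p - 1)^2 * (w - 1)
      = w * D - (6 * p * (p^2 - 1) - 9 * (p - 1)^2)"
    unfolding D_def by (simp add: algebra_simps power2_eq_square)
  ultimately show ?thesis using assms by (smt (verit) zero_le_power2)
qed

lemma bound_constant_estimate:
  fixes p w :: real
  assumes "p \<ge> 7" "w \<ge> p^2"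
  defines "c \<equiv> 3 * (p - 1) / (2 * p)"
  shows "c^2 * (w - 1) \<le> (p + 1) * ((c - 1) * w - c)"
proof -
  have "c^2 * (w - 1) = 9 * (p - 1)^2 * (w - 1) / (4 * p^2)"
    unfolding c_def using assms(1) by (simp add: field_simps power2_eq_square)
  also have "\<dots> \<le> 2 * p * (p + 1) * ((p - 3) * w - 3 * (p - 1)) / (4 * p^2)"
    using bound_polynomial_estimate[OF assms(1,2)] by (intro divide_right_mono) auto
  also have "\<dots> = (p + 1) * ((c - 1) * w - c)"
    unfolding c_def using assms(1) by (simp add: field_simps power2_eq_square)
  finally show ?thesis .
qed

lemma size_quadratic_at_bound:
  fixes p q Q w :: real
  assumes "p \<ge> 7" "p \<le> q" "Q \<ge> 1" "w \<ge> q^2"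
  shows "size_quadratic p q Q w (3 * (Q - Q / p) / 2) < 0"
proof -
  define c where "c = 3 * (p - 1) / (2 * p)"
  define x0 where "x0 = c * Q"
  define F where "F = (c - 1) * w - c"
  have x0: "3 * (Q - Q / p) / 2 = x0" unfolding x0_def c_def using assms(1) by (simp add: field_simps)
  have "q \<ge> 7" using assms by simp
  hence w49: "w \<ge> 49" and wq: "w > q" using large_square_bounds assms(4) by auto
  have "p^2 \<le> q^2" using assms by (intro power_mono) auto
  hence "p^2 \<le> w" using assms(4) by simp
  hence key: "c^2 * (w - 1) \<le> (p + 1) * F" unfolding c_def F_def by (rule bound_constant_estimate[OF assms(1)])
  have "c - 1 \<ge> 2/7" "c < 2" unfolding c_def using assms(1) by (simp_all add: field_simps)
  moreover have "(c - 1) * w \<ge> (2/7) * 49" using calculation w49 by (intro mult_mono) auto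
  ultimately have "F > 0" unfolding F_def by simp
  have A: "Q * (w - q) \<le> Q * w - q" and A0: "0 \<le> Q * (w - q)" and QF: "0 \<le> Q * F"
    using assms \<open>q \<ge> 7\<close> wq \<open>F > 0\<close> by (simp_all add: algebra_simps)
  have "x0 * (w - 1) - (Q * w - 1) = Q * F + 1" unfolding x0_def F_def by (simp add: algebra_simps)
  hence "(Q * (w - q)) * (Q * F) \<le> (Q * w - q) * (x0 * (w - 1) - (Q * w - 1))"
    using A A0 QF by (intro mult_mono) auto
  hence R: "(p + 1) * ((Q * (w - q)) * (Q * F)) \<le> (p + 1) * ((Q * w - q) * (x0 * (w - 1) - (Q * w - 1)))"
    using assms(1) by simp
  have "x0 > 0" unfolding x0_def c_def using assms by simp
  hence "x0 * (x0 - 1) < x0^2" by (simp add: power2_eq_square algebra_simps)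
  moreover have "(w - 1) * (w - q) > 0" using w49 wq by simp
  ultimately have "x0 * (x0 - 1) * ((w - 1) * (w - q)) < x0^2 * ((w - 1) * (w - q))"
    by (rule mult_strict_right_mono)
  hence "x0 * (x0 - 1) * (w - 1) * (w - q) < x0^2 * ((w - 1) * (w - q))"
    by (simp add: mult.assoc)
  also have "x0^2 * ((w - 1) * (w - q)) = Q^2 * (w - q) * (c^2 * (w - 1))"
    unfolding x0_def by (simp add: algebra_simps power2_eq_square)
  also have "\<dots> \<le> Q^2 * (w - q) * ((p + 1) * F)" using key assms(3) wq by (intro mult_left_mono) auto
  also have "\<dots> = (p + 1) * ((Q * (w - q)) * (Q * F))" by (simp add: algebra_simps power2_eq_square)
  finally show ?thesis using R unfolding x0 size_quadratic_def by (simp add: algebra_simps)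
qed

text \<open>The variance inequality forces x < 3(Q - Q/p)/2 whenever x < 2Q: otherwise x lies in
  [x0, 2Q), where h is negative.\<close>
lemma variance_inequality_bounds_size:
  fixes x Q w p q :: real
  defines "s \<equiv> (w - 1) / (q - 1)" and "T \<equiv> (Q * w - 1) / (q - 1)"
  assumes "p \<ge> 7" "p \<le> q" "Q \<ge> 1" "w \<ge> q^2"
    and var: "x * (x - 1) * s * (s - 1) - (p + 1) * (T - 1) * (x * s - T) \<ge> 0"
    and "x < 2 * Q"
  shows "x < 3 * (Q - Q / p) / 2"
proof (rule ccontr)
  assume "\<not> x < 3 * (Q - Q / p) / 2"
  have "q \<ge> 7" using assms by simp
  hence "w \<ge> 49" "w > q" using large_square_bounds assms(6) by auto
  have "s * (q - 1) = w - 1" "T * (q - 1) = Q * w - 1" using \<open>q \<ge> 7\<close> by (simp_all add: s_def T_def)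
  hence "size_quadratic p q Q w x = (q - 1)^2 * (x * (x - 1) * s * (s - 1) - (p + 1) * (T - 1) * (x * s - T))"
    unfolding size_quadratic_def by algebra
  hence "size_quadratic p q Q w x \<ge> 0" using var by simp
  moreover have "size_quadratic p q Q w x < 0"
    using size_quadratic_neg_between[OF _ _ _ \<open>x < 2 * Q\<close> size_quadratic_at_bound[OF assms(3-6)]
        size_quadratic_at_double] assms \<open>\<not> x < 3 * (Q - Q / p) / 2\<close> \<open>q \<ge> 7\<close> \<open>w \<ge> 49\<close> \<open>w > q\<close>
    by auto
  ultimately show False by simp
qed

theorem mainTheorem1:
  fixes B :: "('a::{field,finite} ^ 'n::finite) set set"
    and n k p h q :: nat
  assumes "CARD('n) = n + 1"
    and "n \<ge> 2" and "1 \<le> k" and "k \<le> n - 1"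
    and "prime p" and "p > 5" and "h \<ge> 1" and "q = p ^ h"
    and "CARD('a) = q"
    and "minimal_blocking_set n k B"
    and "\<forall>U. proj_subspace (n - k) U \<longrightarrow> card (meet B U) mod p = 1 mod p"
    and "theta q k < card B" and "card B < 2 * q ^ k"
  shows "real (card B) < 3 * (real q ^ k - real q ^ k / real p) / 2"
proof -
  define m where "m = n - k"
  have m: "1 \<le> m" "m < n" "n = k + m" using assms(2-4) unfolding m_def by auto
  have "odd p" using assms(5,6) prime_odd_nat by auto
  hence p7: "p \<ge> 7" using assms(6) by presburger
  have pq: "p \<le> q" using assms(7,8) p7 by (simp add: self_le_power)
  have Bpts: "B \<subseteq> proj_points" and B: "\<And>U. proj_subspace m U \<Longrightarrow> meet B U \<noteq> {} \<and> card (meet B U) mod p = 1 mod p"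
    using assms(10,11) unfolding minimal_blocking_set_def blocking_set_def m_def by auto
  define Q where "Q = real q ^ k"
  define w where "w = real q ^ (m + 1)"
  have Qw: "real q ^ (n + 1) = Q * w" unfolding Q_def w_def using m(3) by (simp add: power_add)
  have var: "0 \<le> real (card B) * (real (card B) - 1) * ((w - 1) / (real q - 1)) * ((w - 1) / (real q - 1) - 1)
      - (real p + 1) * ((Q * w - 1) / (real q - 1) - 1)
        * (real (card B) * ((w - 1) / (real q - 1)) - (Q * w - 1) / (real q - 1))"
    using intersection_variance_inequality[OF assms(1) m(1,2) Bpts _ B] p7
    unfolding assms(9) Qw w_def[symmetric] by simp
  have "Q \<ge> 1" unfolding Q_def using pq p7 by simp
  moreover have "real q ^ 2 \<le> w" unfolding w_def using m(1) pq p7 by (intro power_increasing) auto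
  moreover have "real (card B) < 2 * Q" unfolding Q_def using assms(13) by (simp flip: of_nat_power)
  ultimately show ?thesis
    using variance_inequality_bounds_size[OF _ _ _ _ var] p7 pq unfolding Q_def by simp
qed

end
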